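(* Let $\mathcal{A}$ be a separating union-closed family with base set $[n]$ and height $h=4$, and suppose $|\mathcal{B}(\mathcal{A})|=4$. Then $|B|=n$, where $B=b(\mathcal{A}_{<n/2})$.
   Context: A family of sets $\mathcal{A}$ is union-closed if it is a finite family of distinct finite sets with at least one nonempty member set, and $X,Y\in\mathcal{A}$ implies $X\cup Y\in\mathcal{A}$ (the empty set may be a member). For a family $\mathcal{F}$, $b(\mathcal{F})=\bigcup_{F\in\mathcal{F}}F$; the base set $b(\mathcal{A})$ is denoted $[n]=\{1,\dots,n\}$. $\mathcal{A}$ is separating if for any two distinct $x,y\in[n]$ there is $A\in\mathcal{A}$ containing exactly one of $x,y$. A chain in $\mathcal{A}$ is a subfamily any two distinct members of which are comparable under proper inclusion; the height $h$ of $\mathcal{A}$ is the maximum size of a chain in $\mathcal{A}$. For real $x\ge 0$, $\mathcal{A}_{<x}=\{A\in\mathcal{A} : |A|<x\}$. For $\mathcal{S}\subseteq\mathcal{A}$ and $S\in\mathcal{S}$, $\mathrm{irr}_{\mathcal{S}}(S)=\{s\in S : s\notin b(\mathcal{S}\setminus\{S\})\}$, and $\mathcal{S}$ is irredundant if $\mathrm{irr}_{\mathcal{S}}(S)\neq\emptyset$ for every $S\in\mathcal{S}$. With $B=b(\mathcal{A}_{<n/2})$, $\mathcal{B}(\mathcal{A})$ denotes any irredundant subfamily of $\mathcal{A}_{<n/2}$ of minimum size such that $b(\mathcal{B}(\mathcal{A}))=B$. *)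

theory Defs
  imports Main Complex_Main
begin

definition union_closed :: "'a set set \<Rightarrow> bool" where
  "union_closed A \<longleftrightarrow> finite A \<and> (\<forall>X\<in>A. finite X) \<and> (\<exists>X\<in>A. X \<noteq> {}) \<and>
     (\<forall>X\<in>A. \<forall>Y\<in>A. X \<union> Y \<in> A)"

definition separating :: "'a set set \<Rightarrow> bool" where
  "separating A \<longleftrightarrow> (\<forall>x\<in>\<Union>A. \<forall>y\<in>\<Union>A. x \<noteq> y \<longrightarrow>
     (\<exists>X\<in>A. (x \<in> X \<and> y \<notin> X) \<or> (y \<in> X \<and> x \<notin> X)))"

definition is_chain :: "'a set set \<Rightarrow> bool" where
  "is_chain C \<longleftrightarrow> (\<forall>X\<in>C. \<forall>Y\<in>C. X \<noteq> Y \<longrightarrow> X \<subset> Y \<or> Y \<subset> X)"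

definition height :: "'a set set \<Rightarrow> nat" where
  "height A = Max (card ` {C. C \<subseteq> A \<and> is_chain C})"

definition below :: "'a set set \<Rightarrow> real \<Rightarrow> 'a set set" where
  "below A x = {X \<in> A. real (card X) < x}"

definition irr :: "'a set set \<Rightarrow> 'a set \<Rightarrow> 'a set" where
  "irr S X = {s \<in> X. s \<notin> \<Union>(S - {X})}"

definition irredundant :: "'a set set \<Rightarrow> bool" where
  "irredundant S \<longleftrightarrow> (\<forall>X\<in>S. irr S X \<noteq> {})"

text \<open>S is a valid choice of the family calB(A): an irredundant subfamily of A_{<n/2}
  of minimum size whose union is B = b(A_{<n/2}).\<close>
definition is_calB :: "'a set set \<Rightarrow> nat \<Rightarrow> 'a set set \<Rightarrow> bool" where
  "is_calB A n S \<longleftrightarrow>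
     (let L = below A (real n / 2) in
      S \<subseteq> L \<and> irredundant S \<and> \<Union>S = \<Union>L \<and>
      (\<forall>T. T \<subseteq> L \<and> irredundant T \<and> \<Union>T = \<Union>L \<longrightarrow> card S \<le> card T))"

end

theory Submission
  imports Defs
begin

text \<open>Adding the members of an irredundant family one at a time, each new member contributes
  an irredundant point, so the partial unions form a strict chain with one link per member.
  For \<open>\<B>(\<A>)\<close> with four members this chain has length four and ends in \<open>B\<close>; were \<open>B \<noteq> [n]\<close>,
  the top set \<open>[n] \<in> \<A>\<close> would extend it to a chain of length five, contradicting \<open>h = 4\<close>.\<close>

lemma Union_in_if_union_closed:
  assumes "finite F" "F \<noteq> {}" "F \<subseteq> A" "\<forall>X\<in>A. \<forall>Y\<in>A. X \<union> Y \<in> A"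
  shows "\<Union>F \<in> A"
  using assms(1-3) by (induction F rule: finite_ne_induct) (use assms(4) in auto)

lemma is_chain_insert_top:
  assumes "is_chain C" "finite C" "\<And>Y. Y \<in> C \<Longrightarrow> Y \<subset> T"
  shows "is_chain (insert T C)" "card (insert T C) = Suc (card C)"
proof -
  show "is_chain (insert T C)"
    using assms(1,3) unfolding is_chain_def by blast
  have "T \<notin> C"
    using assms(3) by blast
  then show "card (insert T C) = Suc (card C)"
    using assms(2) by simp
qed

lemma card_chain_le_height:
  assumes "finite A" "C \<subseteq> A" "is_chain C"
  shows "card C \<le> height A"
proof -
  have "finite (card ` {C. C \<subseteq> A \<and> is_chain C})"
    using assms(1) by simp
  then show ?thesis
    unfolding height_def using assms(2,3) by (auto intro: Max_ge)
qed

lemma irredundant_subset: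
  assumes "irredundant S" "T \<subseteq> S"
  shows "irredundant T"
proof -
  have "irr S X \<subseteq> irr T X" if "X \<in> T" for X
    using assms(2) unfolding irr_def by blast
  then show ?thesis
    using assms unfolding irredundant_def by blast
qed

lemma irredundant_chain_of_unions:
  assumes "finite S" "S \<noteq> {}" "irredundant S" "S \<subseteq> A" "\<forall>X\<in>A. \<forall>Y\<in>A. X \<union> Y \<in> A"
  shows "\<exists>C \<subseteq> A. is_chain C \<and> card C = card S \<and> \<Union>S \<in> C \<and> (\<forall>Y\<in>C. Y \<subseteq> \<Union>S)"
  using assms(1-4)
proof (induction S rule: finite_ne_induct)
  case (singleton X)
  then show ?case
    by (intro exI[of _ "{X}"]) (simp add: is_chain_def)
next
  case (insert X S)
  obtain C where C: "C \<subseteq> A" "is_chain C" "card C = card S" "\<Union>S \<in> C" "\<forall>Y\<in>C. Y \<subseteq> \<Union>S"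
    using insert.IH insert.prems irredundant_subset[of "insert X S" S] by blast
  obtain x where "x \<in> irr (insert X S) X"
    using insert.prems(1) unfolding irredundant_def by blast
  then have "x \<in> X" "x \<notin> \<Union>S"
    using insert.hyps(3) unfolding irr_def by auto
  define T where "T = \<Union>(insert X S)"
  have "\<Union>S \<subset> T"
    using \<open>x \<in> X\<close> \<open>x \<notin> \<Union>S\<close> unfolding T_def by blast
  then have strict: "Y \<subset> T" if "Y \<in> C" for Y
    using C(5) that by (meson subset_psubset_trans)
  have "T \<in> A"
    using C(1,4) insert.prems(2) assms(5) unfolding T_def by auto
  have "finite C"
    using C(3) insert.hyps(1,2) card_gt_0_iff[of S] card_ge_0_finite[of C] by simp
  note chain = is_chain_insert_top[OF C(2) this strict]
  have "card (insert T C) = card (insert X S)"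
    using chain(2) C(3) insert.hyps by simp
  moreover have "\<forall>Y\<in>insert T C. Y \<subseteq> T"
    using strict psubset_imp_subset by blast
  ultimately show ?case
    using C(1) chain(1) \<open>T \<in> A\<close> unfolding T_def[symmetric]
    by (intro exI[of _ "insert T C"]) simp
qed

theorem propositionJ:
  fixes A :: "nat set set" and n :: nat and S :: "nat set set"
  assumes "union_closed A"
    and "\<Union>A = {1..n}"
    and "separating A"
    and "height A = 4"
    and "is_calB A n S"
    and "card S = 4"
  shows "card (\<Union>(below A (real n / 2))) = n"
proof (rule ccontr)
  define L where "L = below A (real n / 2)"
  assume "card (\<Union>(below A (real n / 2))) \<noteq> n"
  moreover have "\<Union>L \<subseteq> {1..n}"
    using assms(2) unfolding L_def below_def by auto
  ultimately have L_proper: "\<Union>L \<subset> {1..n}"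
    unfolding L_def by auto
  have A: "finite A" "A \<noteq> {}" "\<forall>X\<in>A. \<forall>Y\<in>A. X \<union> Y \<in> A"
    using assms(1) unfolding union_closed_def by auto
  have S: "S \<subseteq> A" "irredundant S" "\<Union>S = \<Union>L" "finite S" "S \<noteq> {}"
    using assms(5,6) card_gt_0_iff[of S] unfolding is_calB_def L_def below_def Let_def by auto
  obtain C where C: "C \<subseteq> A" "is_chain C" "card C = 4" "\<forall>Y\<in>C. Y \<subseteq> \<Union>L"
    using irredundant_chain_of_unions[OF S(4,5,2,1) A(3)] S(3) assms(6) by auto
  have strict: "Y \<subset> {1..n}" if "Y \<in> C" for Y
    using C(4) that L_proper by (meson subset_psubset_trans)
  have "{1..n} \<in> A"
    using Union_in_if_union_closed[of A A] A assms(2) by simp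
  have "finite C"
    using C(3) card_ge_0_finite[of C] by simp
  note chain = is_chain_insert_top[OF C(2) this strict]
  have "card (insert {1..n} C) \<le> height A"
    using card_chain_le_height[OF A(1) _ chain(1)] C(1) \<open>{1..n} \<in> A\<close> by simp
  then have "5 \<le> height A"
    using chain(2) C(3) by simp
  then show False
    using assms(4) by simp
qed

end
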